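(* Each of the logics $\mathbf{PD}$, $\mathsf{InqL}$ and $\mathbf{PT}$ is $\mathcal{F}$-structurally complete, where $\mathcal{F}$ is the class of all flat substitutions: for every such logic $\mathsf{L}$ and all formulas $\phi,\psi$ in the language of $\mathsf{L}$, if for every flat substitution $\sigma$ of $\mathsf{L}$, $\vdash_{\mathsf{L}}\sigma(\phi)$ implies $\vdash_{\mathsf{L}}\sigma(\psi)$, then $\phi\vdash_{\mathsf{L}}\psi$.
   Context: Fix a countably infinite set Prop of propositional variables. A valuation is a function $v:\mathrm{Prop}\to\{0,1\}$; a team is a set of valuations. Formulas of the extended propositional downwards closed team logic $\mathbf{PT}$ are given by $\phi::=p\mid\bot\mid\top\mid\,=\!(\phi_1,\dots,\phi_n,\phi)\mid\neg\phi\mid\phi\wedge\phi\mid\phi\otimes\phi\mid\phi\vee\phi\mid\phi\to\phi$ ($p\in\mathrm{Prop}$). Satisfaction of a formula on a team $X$: $X\models p$ iff $v(p)=1$ for all $v\in X$; $X\models\bot$ iff $X=\emptyset$; $X\models\top$ always; $X\models\phi\wedge\psi$ iff $X\models\phi$ and $X\models\psi$; $X\models\phi\otimes\psi$ iff $X=Y\cup Z$ for some $Y,Z\subseteq X$ with $Y\models\phi$, $Z\models\psi$; $X\models\phi\vee\psi$ iff $X\models\phi$ or $X\models\psi$; $X\models\phi\to\psi$ iff for every $Y\subseteq X$, $Y\models\phi$ implies $Y\models\psi$; $X\models\neg\phi$ iff $\{v\}\not\models\phi$ for all $v\in X$ (equivalently $X\models\phi\to\bot$); $X\models\,=\!(\phi_1,\dots,\phi_n,\psi)$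 iff $X\models\bigwedge_{i=1}^n(\phi_i\vee(\phi_i\to\bot))\to(\psi\vee(\psi\to\bot))$. A formula $\phi$ is flat if for every team $X$: $X\models\phi$ iff $\{v\}\models\phi$ for all $v\in X$. Formulas of the extended propositional dependence logic $\mathbf{PD}$ are given by $\phi::=p\mid\bot\mid\top\mid\,=\!(\alpha_1,\dots,\alpha_k,\beta)\mid\neg\phi\mid\phi\wedge\phi\mid\phi\otimes\phi$ where $\alpha_i,\beta$ are flat formulas of $\mathbf{PD}$; they are evaluated by the same clauses, where for flat arguments the dependence clause is equivalent to: $X\models\,=\!(\vec\alpha,\beta)$ iff for all $v,v'\in X$, if $\{v\}\models\alpha_i\Leftrightarrow\{v'\}\models\alpha_i$ for every $i$, then $\{v\}\models\beta\Leftrightarrow\{v'\}\models\beta$. Formulas of propositional inquisitive logic $\mathsf{InqL}$ are built from $p,\bot,\top$ using $\wedge,\vee,\to$ with the same clauses ($\neg\phi$ abbreviates $\phi\to\bot$). For finite $\Gamma$, $\Gamma\models\phi$ means every team satisfying all formulas of $\Gamma$ satisfies $\phi$; for $\mathsf{L}\in\{\mathbf{PD},\mathsf{InqL},\mathbf{PT}\}$, $\Gamma\vdash_{\mathsf{L}}\phi$ iff $\phi$ and all members of $\Gamma$ are in the language of $\mathsf{L}$ and $\Gamma\models\phi$; $\vdash_{\mathsf L}\phi$ means $\emptyset\vdash_{\mathsf L}\phi$. A substitution of $\mathsf{L}$ is a map from formulas of $\mathsf{L}$ to formulas of $\mathsf{L}$ commuting with all connectives and atoms (so $\sigma(\bot)=\bot$,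 $\sigma(\top)=\top$, $\sigma(\neg\phi)=\neg\sigma(\phi)$, $\sigma(\phi\circ\psi)=\sigma(\phi)\circ\sigma(\psi)$, $\sigma(=\!(\vec\phi,\psi))=\,=\!(\sigma(\vec\phi),\sigma(\psi))$); it is flat if $\sigma(p)$ is flat for every $p\in\mathrm{Prop}$. *)

theory Defs
  imports Main
begin

type_synonym valuation = "nat \<Rightarrow> bool"
type_synonym team = "valuation set"

text \<open>Formulas of PT. Dep ps q is the dependence atom =(ps_1,...,ps_n,q).\<close>
datatype fm =
    Var nat
  | Bot
  | Top
  | Dep "fm list" fm
  | Neg fm
  | Conj fm fm
  | Tensor fm fm
  | Idisj fm fm
  | Imp fm fm

fun sat :: "team \<Rightarrow> fm \<Rightarrow> bool" where
  "sat X (Var p) = (\<forall>v\<in>X. v p)"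
| "sat X Bot = (X = {})"
| "sat X Top = True"
| "sat X (Dep ps q) =
     (\<forall>Y\<subseteq>X. (\<forall>p\<in>set ps. sat Y p \<or> (\<forall>Z\<subseteq>Y. sat Z p \<longrightarrow> Z = {}))
        \<longrightarrow> (sat Y q \<or> (\<forall>Z\<subseteq>Y. sat Z q \<longrightarrow> Z = {})))"
| "sat X (Neg f) = (\<forall>v\<in>X. \<not> sat {v} f)"
| "sat X (Conj f g) = (sat X f \<and> sat X g)"
| "sat X (Tensor f g) = (\<exists>Y Z. Y \<subseteq> X \<and> Z \<subseteq> X \<and> X = Y \<union> Z \<and> sat Y f \<and> sat Z g)"
| "sat X (Idisj f g) = (sat X f \<or> sat X g)"
| "sat X (Imp f g) = (\<forall>Y\<subseteq>X. sat Y f \<longrightarrow> sat Y g)"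

definition flat :: "fm \<Rightarrow> bool" where
  "flat f \<longleftrightarrow> (\<forall>X. sat X f \<longleftrightarrow> (\<forall>v\<in>X. sat {v} f))"

text \<open>Languages of the three logics (as predicates on PT formulas).\<close>
definition inPT :: "fm \<Rightarrow> bool" where
  "inPT f = True"

fun inPD :: "fm \<Rightarrow> bool" where
  "inPD (Var p) = True"
| "inPD Bot = True"
| "inPD Top = True"
| "inPD (Dep ps q) = ((\<forall>p\<in>set ps. inPD p \<and> flat p) \<and> inPD q \<and> flat q)"
| "inPD (Neg f) = inPD f"
| "inPD (Conj f g) = (inPD f \<and> inPD g)"
| "inPD (Tensor f g) = (inPD f \<and> inPD g)"
| "inPD (Idisj f g) = False"
| "inPD (Imp f g) = False"

fun inInqL :: "fm \<Rightarrow> bool" where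
  "inInqL (Var p) = True"
| "inInqL Bot = True"
| "inInqL Top = True"
| "inInqL (Dep ps q) = False"
| "inInqL (Neg f) = False"
| "inInqL (Conj f g) = (inInqL f \<and> inInqL g)"
| "inInqL (Tensor f g) = False"
| "inInqL (Idisj f g) = (inInqL f \<and> inInqL g)"
| "inInqL (Imp f g) = (inInqL f \<and> inInqL g)"

definition entails :: "fm set \<Rightarrow> fm \<Rightarrow> bool" where
  "entails \<Gamma> f \<longleftrightarrow> (\<forall>X. (\<forall>g\<in>\<Gamma>. sat X g) \<longrightarrow> sat X f)"

definition derives :: "(fm \<Rightarrow> bool) \<Rightarrow> fm set \<Rightarrow> fm \<Rightarrow> bool" where
  "derives L \<Gamma> f \<longleftrightarrow> finite \<Gamma> \<and> L f \<and> (\<forall>g\<in>\<Gamma>. L g) \<and> entails \<Gamma> f"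

fun subst :: "(nat \<Rightarrow> fm) \<Rightarrow> fm \<Rightarrow> fm" where
  "subst s (Var p) = s p"
| "subst s Bot = Bot"
| "subst s Top = Top"
| "subst s (Dep ps q) = Dep (map (subst s) ps) (subst s q)"
| "subst s (Neg f) = Neg (subst s f)"
| "subst s (Conj f g) = Conj (subst s f) (subst s g)"
| "subst s (Tensor f g) = Tensor (subst s f) (subst s g)"
| "subst s (Idisj f g) = Idisj (subst s f) (subst s g)"
| "subst s (Imp f g) = Imp (subst s f) (subst s g)"

definition subst_of :: "(fm \<Rightarrow> bool) \<Rightarrow> (nat \<Rightarrow> fm) \<Rightarrow> bool" where
  "subst_of L s \<longleftrightarrow> (\<forall>f. L f \<longrightarrow> L (subst s f))"

definition flat_subst_of :: "(fm \<Rightarrow> bool) \<Rightarrow> (nat \<Rightarrow> fm) \<Rightarrow> bool" where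
  "flat_subst_of L s \<longleftrightarrow> subst_of L s \<and> (\<forall>p. flat (s p))"

end

theory Submission
  imports Defs
begin

text \<open>A flat substitution s acts on valuations by w \<mapsto> (p \<mapsto> {w} \<Turnstile> s p), and
  X \<Turnstile> s(\<phi>) iff the image of X under this map satisfies \<phi>. By downward closure,
  s(\<phi>) is valid iff \<phi> holds on the image of the full team. A countermodel of \<phi> \<Turnstile> \<psi>
  can be taken finite (only the variables of \<phi>, \<psi> matter), and every finite nonempty team
  is such an image: choose s p as a nested flat case distinction on the atoms 0, 1, ...,
  written with the connectives available in the logic. For this s, s(\<phi>) is valid
  while s(\<psi>) is not.\<close>

lemma sat_empty: "sat {} f"
  by (induction f) auto

lemma sat_downward_closed: "sat X f \<Longrightarrow> Y \<subseteq> X \<Longrightarrow> sat Y f"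
proof (induction f arbitrary: X Y)
  case (Tensor f g)
  then obtain A B where AB: "X = A \<union> B" "sat A f" "sat B g" by auto
  have "sat (A \<inter> Y) f" "sat (B \<inter> Y) g" using Tensor.IH AB by auto
  moreover have "Y = (A \<inter> Y) \<union> (B \<inter> Y)" using AB Tensor.prems by auto
  ultimately show ?case unfolding sat.simps by blast
qed auto

lemma sat_Neg_iff_no_nonempty_subteam:
  "sat X (Neg f) \<longleftrightarrow> (\<forall>Y\<subseteq>X. sat Y f \<longrightarrow> Y = {})"
proof
  assume "sat X (Neg f)"
  then show "\<forall>Y\<subseteq>X. sat Y f \<longrightarrow> Y = {}"
    using sat_downward_closed[of _ f "{_}"] by (auto simp: subset_iff)
next
  assume "\<forall>Y\<subseteq>X. sat Y f \<longrightarrow> Y = {}"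
  then show "sat X (Neg f)" by auto
qed

lemma sat_Dep_iff:
  "sat X (Dep ps q) \<longleftrightarrow>
     (\<forall>Y\<subseteq>X. (\<forall>p\<in>set ps. sat Y p \<or> sat Y (Neg p)) \<longrightarrow> sat Y q \<or> sat Y (Neg q))"
  unfolding sat_Neg_iff_no_nonempty_subteam by (rule sat.simps(4))

lemma all_subsets_image_iff: "(\<forall>Z\<subseteq>Y. P (h ` Z)) \<longleftrightarrow> (\<forall>Z\<subseteq>h ` Y. P Z)"
proof
  assume all: "\<forall>Z\<subseteq>Y. P (h ` Z)"
  show "\<forall>Z\<subseteq>h ` Y. P Z"
  proof (intro allI impI)
    fix Z assume "Z \<subseteq> h ` Y"
    then obtain W where "W \<subseteq> Y" "Z = h ` W" by (rule subset_imageE)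
    with all show "P Z" by blast
  qed
qed blast

lemma image_Un_split:
  assumes "h ` Y = A \<union> B"
  shows "Y = (Y \<inter> h -` A) \<union> (Y \<inter> h -` B)" "h ` (Y \<inter> h -` A) = A" "h ` (Y \<inter> h -` B) = B"
proof -
  have "A \<subseteq> h ` Y" "B \<subseteq> h ` Y" "h ` Y \<subseteq> A \<union> B" using assms by auto
  then show "Y = (Y \<inter> h -` A) \<union> (Y \<inter> h -` B)" "h ` (Y \<inter> h -` A) = A" "h ` (Y \<inter> h -` B) = B"
    by auto
qed

lemma flat_Var: "flat (Var p)" unfolding flat_def by auto
lemma flat_Top: "flat Top" unfolding flat_def by auto
lemma flat_Bot: "flat Bot" unfolding flat_def by auto
lemma flat_Neg: "flat (Neg f)" unfolding flat_def by auto
lemma flat_Conj: "flat f \<Longrightarrow> flat g \<Longrightarrow> flat (Conj f g)" unfolding flat_def sat.simps by blast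

lemma sat_Imp_Bot: "sat X (Imp f Bot) \<longleftrightarrow> sat X (Neg f)"
  by (simp only: sat.simps(2,9) sat_Neg_iff_no_nonempty_subteam)

lemma flat_Imp_Bot: "flat (Imp f Bot)"
  using flat_Neg unfolding flat_def sat_Imp_Bot .

definition induced_val :: "(nat \<Rightarrow> fm) \<Rightarrow> valuation \<Rightarrow> valuation" where
  "induced_val s w = (\<lambda>p. sat {w} (s p))"

lemma sat_Neg_image:
  assumes "\<And>v. sat {v} g \<longleftrightarrow> sat {h v} f"
  shows "sat Y (Neg g) \<longleftrightarrow> sat (h ` Y) (Neg f)"
  using assms by simp

lemma sat_subst:
  assumes flat: "\<forall>p. flat (s p)"
  shows "sat X (subst s f) \<longleftrightarrow> sat (induced_val s ` X) f"
proof (induction f arbitrary: X)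
  case (Var p)
  have "sat X (s p) \<longleftrightarrow> (\<forall>v\<in>X. sat {v} (s p))" using flat unfolding flat_def by blast
  then show ?case by (simp add: induced_val_def)
next
  case (Dep ps q)
  have decided: "(sat Y (subst s g) \<or> sat Y (Neg (subst s g))) \<longleftrightarrow>
      (sat (induced_val s ` Y) g \<or> sat (induced_val s ` Y) (Neg g))"
    if IH: "\<And>X. sat X (subst s g) \<longleftrightarrow> sat (induced_val s ` X) g" for Y g
  proof -
    have "sat Y (Neg (subst s g)) \<longleftrightarrow> sat (induced_val s ` Y) (Neg g)"
      by (rule sat_Neg_image) (simp add: IH)
    then show ?thesis using IH by blast
  qed
  let ?dep = "\<lambda>Z. (\<forall>p\<in>set ps. sat Z p \<or> sat Z (Neg p)) \<longrightarrow> sat Z q \<or> sat Z (Neg q)"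
  have "(\<forall>p\<in>set ps. sat Y (subst s p) \<or> sat Y (Neg (subst s p))) \<longleftrightarrow>
      (\<forall>p\<in>set ps. sat (induced_val s ` Y) p \<or> sat (induced_val s ` Y) (Neg p))" for Y
    using decided[OF Dep.IH(1)] by blast
  moreover note decided[OF Dep.IH(2)]
  ultimately have "sat X (subst s (Dep ps q)) \<longleftrightarrow> (\<forall>Y\<subseteq>X. ?dep (induced_val s ` Y))"
    unfolding subst.simps sat_Dep_iff set_map ball_simps by (simp only:)
  also have "\<dots> \<longleftrightarrow> (\<forall>Z\<subseteq>induced_val s ` X. ?dep Z)"
    by (rule all_subsets_image_iff)
  also have "\<dots> \<longleftrightarrow> sat (induced_val s ` X) (Dep ps q)"
    unfolding sat_Dep_iff ..
  finally show ?case .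
next
  case (Tensor f g)
  show ?case
  proof
    assume "sat X (subst s (Tensor f g))"
    then obtain A B where "X = A \<union> B" "sat (induced_val s ` A) f" "sat (induced_val s ` B) g"
      using Tensor.IH by auto
    then show "sat (induced_val s ` X) (Tensor f g)"
      unfolding sat.simps by (intro exI[of _ "induced_val s ` A"] exI[of _ "induced_val s ` B"]) auto
  next
    assume "sat (induced_val s ` X) (Tensor f g)"
    then obtain A B where AB: "induced_val s ` X = A \<union> B" "sat A f" "sat B g" by auto
    define A' B' where "A' = X \<inter> induced_val s -` A" and "B' = X \<inter> induced_val s -` B"
    have "X = A' \<union> B'" "induced_val s ` A' = A" "induced_val s ` B' = B"
      using image_Un_split[OF AB(1)] unfolding A'_def B'_def by simp_all
    then have "sat A' (subst s f)" "sat B' (subst s g)" "X = A' \<union> B'"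
      using Tensor.IH AB by simp_all
    then show "sat X (subst s (Tensor f g))"
      unfolding subst.simps sat.simps by blast
  qed
next
  case (Imp f g)
  then show ?case
    using all_subsets_image_iff[where P = "\<lambda>Z. sat Z f \<longrightarrow> sat Z g"] by simp
qed auto

text \<open>The flag selects the primitive Neg of PD and PT or the InqL negation Imp _ Bot; on
  singleton teams both are classical negation.\<close>

definition classical_neg :: "bool \<Rightarrow> fm \<Rightarrow> fm" where
  "classical_neg prim f = (if prim then Neg f else Imp f Bot)"

definition classical_imp :: "bool \<Rightarrow> fm \<Rightarrow> fm \<Rightarrow> fm" where
  "classical_imp prim f g = classical_neg prim (Conj f (classical_neg prim g))"

definition classical_ite :: "bool \<Rightarrow> fm \<Rightarrow> fm \<Rightarrow> fm \<Rightarrow> fm" where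
  "classical_ite prim f g h =
     Conj (classical_imp prim f g) (classical_imp prim (classical_neg prim f) h)"

lemma flat_classical_neg: "flat (classical_neg prim f)"
  unfolding classical_neg_def using flat_Neg flat_Imp_Bot by simp

lemma sat_classical_neg_singleton: "sat {v} (classical_neg prim f) \<longleftrightarrow> \<not> sat {v} f"
  by (cases prim) (simp_all add: classical_neg_def sat_Imp_Bot del: sat.simps(9))

lemma flat_classical_ite: "flat (classical_ite prim f g h)"
  unfolding classical_ite_def classical_imp_def by (intro flat_Conj flat_classical_neg)

lemma sat_classical_ite_singleton:
  "sat {v} (classical_ite prim f g h) \<longleftrightarrow> (if sat {v} f then sat {v} g else sat {v} h)"
  unfolding classical_ite_def classical_imp_def by (simp add: sat_classical_neg_singleton)

fun select :: "valuation \<Rightarrow> valuation list \<Rightarrow> nat \<Rightarrow> valuation" where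
  "select w [] i = (\<lambda>_. False)"
| "select w [u] i = u"
| "select w (u # v # us) i = (if w i then u else select w (v # us) (Suc i))"

fun select_fm :: "bool \<Rightarrow> valuation list \<Rightarrow> nat \<Rightarrow> nat \<Rightarrow> fm" where
  "select_fm prim [] i p = Bot"
| "select_fm prim [u] i p = (if u p then Top else Bot)"
| "select_fm prim (u # v # us) i p =
     classical_ite prim (Var i) (if u p then Top else Bot) (select_fm prim (v # us) (Suc i) p)"

lemma flat_select_fm: "flat (select_fm prim us i p)"
  by (induction prim us i p rule: select_fm.induct) (auto intro: flat_classical_ite flat_Top flat_Bot)

lemma sat_select_fm_singleton: "sat {w} (select_fm prim us i p) \<longleftrightarrow> select w us i p"
  by (induction prim us i p rule: select_fm.induct) (auto simp: sat_classical_ite_singleton)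

lemma inPD_select_fm: "inPD (select_fm True us i p)"
  by (induction "True" us i p rule: select_fm.induct)
    (auto simp: classical_ite_def classical_imp_def classical_neg_def flat_Var flat_Top flat_Bot)

lemma inInqL_select_fm: "inInqL (select_fm False us i p)"
  by (induction "False" us i p rule: select_fm.induct)
    (auto simp: classical_ite_def classical_imp_def classical_neg_def)

lemma select_in_set: "us \<noteq> [] \<Longrightarrow> select w us i \<in> set us"
  by (induction w us i rule: select.induct) auto

lemma select_nth: "j < length us \<Longrightarrow> select (\<lambda>k. k = i + j) us i = us ! j"
proof (induction "\<lambda>k::nat. k = i + j" us i arbitrary: j rule: select.induct)
  case (3 u v us i)
  then show ?case by (cases j) auto
qed auto

lemma range_select:
  assumes "us \<noteq> []"
  shows "range (\<lambda>w. select w us 0) = set us"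
proof
  show "range (\<lambda>w. select w us 0) \<subseteq> set us" using select_in_set[OF assms] by auto
  show "set us \<subseteq> range (\<lambda>w. select w us 0)"
  proof
    fix u assume "u \<in> set us"
    then obtain j where "j < length us" "u = us ! j" by (auto simp: in_set_conv_nth)
    then have "u = select (\<lambda>k. k = j) us 0" using select_nth[of j us 0] by simp
    then show "u \<in> range (\<lambda>w. select w us 0)" by blast
  qed
qed

lemma flat_subst:
  assumes flat: "\<forall>p. flat (s p)" and "flat f"
  shows "flat (subst s f)"
  unfolding flat_def
proof
  fix X
  have "sat X (subst s f) \<longleftrightarrow> sat (induced_val s ` X) f" by (rule sat_subst[OF flat])
  also have "\<dots> \<longleftrightarrow> (\<forall>u\<in>induced_val s ` X. sat {u} f)"
    using \<open>flat f\<close>[unfolded flat_def, THEN spec[of _ "induced_val s ` X"]] .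
  also have "\<dots> \<longleftrightarrow> (\<forall>v\<in>X. sat (induced_val s ` {v}) f)" by simp
  also have "\<dots> \<longleftrightarrow> (\<forall>v\<in>X. sat {v} (subst s f))" by (simp only: sat_subst[OF flat])
  finally show "sat X (subst s f) \<longleftrightarrow> (\<forall>v\<in>X. sat {v} (subst s f))" .
qed

lemma subst_of_inPD:
  assumes "\<forall>p. inPD (s p) \<and> flat (s p)"
  shows "subst_of inPD s"
  unfolding subst_of_def
proof (intro allI impI)
  fix f show "inPD f \<Longrightarrow> inPD (subst s f)"
  proof (induction f)
    case (Dep ps q)
    then show ?case using assms flat_subst[of s] by auto
  qed (use assms in auto)
qed

lemma subst_of_inInqL:
  assumes "\<forall>p. inInqL (s p)"
  shows "subst_of inInqL s"
  unfolding subst_of_def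
proof (intro allI impI)
  fix f show "inInqL f \<Longrightarrow> inInqL (subst s f)"
    by (induction f) (use assms in auto)
qed

lemma valid_subst_iff:
  assumes "\<forall>p. flat (s p)"
  shows "entails {} (subst s f) \<longleftrightarrow> sat (range (induced_val s)) f"
proof
  assume "entails {} (subst s f)"
  then have "sat UNIV (subst s f)" unfolding entails_def by blast
  then show "sat (range (induced_val s)) f" unfolding sat_subst[OF assms] .
next
  assume range: "sat (range (induced_val s)) f"
  show "entails {} (subst s f)" unfolding entails_def
  proof (intro allI impI)
    fix X
    have "induced_val s ` X \<subseteq> range (induced_val s)" by blast
    with range have "sat (induced_val s ` X) f" by (rule sat_downward_closed)
    then show "sat X (subst s f)" unfolding sat_subst[OF assms] .
  qed
qed

fun vars :: "fm \<Rightarrow> nat set" where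
  "vars (Var p) = {p}"
| "vars Bot = {}"
| "vars Top = {}"
| "vars (Dep ps q) = (\<Union>p\<in>set ps. vars p) \<union> vars q"
| "vars (Neg f) = vars f"
| "vars (Conj f g) = vars f \<union> vars g"
| "vars (Tensor f g) = vars f \<union> vars g"
| "vars (Idisj f g) = vars f \<union> vars g"
| "vars (Imp f g) = vars f \<union> vars g"

lemma finite_vars: "finite (vars f)"
  by (induction f) auto

lemma subst_Var_on_vars: "vars f \<subseteq> V \<Longrightarrow> subst (\<lambda>p. if p \<in> V then Var p else Bot) f = f"
proof (induction f)
  case (Dep ps q)
  then show ?case by (auto intro: map_idI)
qed auto

definition restrict_val :: "nat set \<Rightarrow> valuation \<Rightarrow> valuation" where
  "restrict_val V w = (\<lambda>p. p \<in> V \<and> w p)"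

lemma sat_restrict_val:
  assumes "vars f \<subseteq> V"
  shows "sat X f \<longleftrightarrow> sat (restrict_val V ` X) f"
proof -
  \<comment> \<open>restrict_val V is the valuation map induced by the substitution fixing V and
    sending all other atoms to Bot, which leaves f unchanged.\<close>
  define s where "s = (\<lambda>p. if p \<in> V then Var p else Bot)"
  have flat: "\<forall>p. flat (s p)" unfolding s_def using flat_Var flat_Bot by simp
  have "induced_val s = restrict_val V"
    unfolding s_def induced_val_def restrict_val_def by (auto intro!: ext)
  then show ?thesis
    using sat_subst[OF flat, of X f] subst_Var_on_vars[OF assms] unfolding s_def by simp
qed

lemma finite_restrict_val_image:
  assumes "finite V"
  shows "finite (restrict_val V ` X)"
proof (rule finite_subset)
  show "restrict_val V ` X \<subseteq> (\<lambda>A p. p \<in> A) ` Pow V"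
  proof (rule image_subsetI)
    fix w
    show "restrict_val V w \<in> (\<lambda>A p. p \<in> A) ` Pow V"
      unfolding restrict_val_def by (rule image_eqI[of _ _ "{p \<in> V. w p}"]) auto
  qed
  show "finite ((\<lambda>A p. p \<in> A) ` Pow V)" using assms by simp
qed

lemma finite_countermodel:
  assumes "\<not> entails {\<phi>} \<psi>"
  obtains X where "finite X" "sat X \<phi>" "\<not> sat X \<psi>"
proof -
  define V where "V = vars \<phi> \<union> vars \<psi>"
  obtain X where "sat X \<phi>" "\<not> sat X \<psi>" using assms unfolding entails_def by auto
  moreover have "vars \<phi> \<subseteq> V" "vars \<psi> \<subseteq> V" unfolding V_def by simp_all
  ultimately have "sat (restrict_val V ` X) \<phi>" "\<not> sat (restrict_val V ` X) \<psi>"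
    using sat_restrict_val by blast+
  moreover have "finite (restrict_val V ` X)"
    unfolding V_def by (intro finite_restrict_val_image finite_UnI finite_vars)
  ultimately show thesis using that by blast
qed

lemma team_induced_by_flat_subst:
  assumes "L \<in> {inPD, inInqL, inPT}" and "finite X" and "X \<noteq> {}"
  obtains s where "flat_subst_of L s" and "range (induced_val s) = X"
proof -
  obtain us where us: "set us = X" using finite_list[OF assms(2)] by blast
  define prim where "prim = (L \<noteq> inInqL)"
  define s where "s = select_fm prim us 0"
  have flat: "\<forall>p. flat (s p)" unfolding s_def using flat_select_fm by simp
  have "induced_val s = (\<lambda>w. select w us 0)"
    unfolding s_def induced_val_def by (simp add: sat_select_fm_singleton)
  then have "range (induced_val s) = X" using range_select us assms(3) by auto
  moreover have "subst_of L s"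
  proof (cases "L = inInqL")
    case True
    then show ?thesis unfolding s_def prim_def by (simp add: subst_of_inInqL inInqL_select_fm)
  next
    case False
    then consider "L = inPD" | "L = inPT" using assms(1) by blast
    then show ?thesis
    proof cases
      case 1
      then show ?thesis
        using False flat unfolding s_def prim_def by (simp add: subst_of_inPD inPD_select_fm)
    next
      case 2
      then show ?thesis by (simp add: subst_of_def inPT_def)
    qed
  qed
  ultimately show thesis using that flat unfolding flat_subst_of_def by blast
qed

theorem theorem5p4:
  assumes "L \<in> {inPD, inInqL, inPT}"
    and "L \<phi>" and "L \<psi>"
    and "\<forall>s. flat_subst_of L s \<longrightarrow>
           derives L {} (subst s \<phi>) \<longrightarrow> derives L {} (subst s \<psi>)"
  shows "derives L {\<phi>} \<psi>"
proof -
  have "entails {\<phi>} \<psi>"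
  proof (rule ccontr)
    assume "\<not> entails {\<phi>} \<psi>"
    then obtain X where X: "finite X" "sat X \<phi>" "\<not> sat X \<psi>" by (rule finite_countermodel)
    then have "X \<noteq> {}" using sat_empty by auto
    with assms(1) X(1) obtain s where s: "flat_subst_of L s" "range (induced_val s) = X"
      by (rule team_induced_by_flat_subst)
    then have flat: "\<forall>p. flat (s p)" and "subst_of L s" unfolding flat_subst_of_def by simp_all
    then have "derives L {} (subst s \<phi>)"
      using assms(2) X(2) s(2) valid_subst_iff[OF flat] unfolding derives_def subst_of_def by simp
    then have "derives L {} (subst s \<psi>)" using assms(4) s(1) by blast
    then show False using X(3) s(2) valid_subst_iff[OF flat] unfolding derives_def by simp
  qed
  then show ?thesis unfolding derives_def using assms(2,3) by simp
qed

end
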